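(* Let $C\subset\mathbb{R}^n$ be a nonempty closed convex set, let $v\in\mathbb{R}^n$, $u\in C$, and let $\gamma\ge 0$ and $\theta,\lambda\in[0,1/2)$. Let $\varphi_{\gamma,\theta,\lambda}$ be a relative error tolerance function and let $w\in\mathcal{P}_C(\varphi_{\gamma,\theta,\lambda},u,v)$. Then $$\|w-x\|^2\le \|v-x\|^2+\frac{2\gamma+2\lambda}{1-2\lambda}\|v-u\|^2\qquad\text{for all } x\in C.$$
   Context: A relative error tolerance function with forcing parameters $\gamma,\theta,\lambda\ge 0$ is any function $\varphi_{\gamma,\theta,\lambda}:\mathbb{R}^n\times\mathbb{R}^n\times\mathbb{R}^n\to[0,\infty)$ satisfying $\varphi_{\gamma,\theta,\lambda}(u,v,w)\le \gamma\|v-u\|^2+\theta\|w-v\|^2+\lambda\|w-u\|^2$ for all $u,v,w\in\mathbb{R}^n$. For a closed convex set $C$ and $u\in C$, the feasible inexact projection set of $v\in\mathbb{R}^n$ relative to $u$ is $\mathcal{P}_C(\varphi_{\gamma,\theta,\lambda},u,v):=\{w\in C:\ \langle v-w,z-w\rangle\le \varphi_{\gamma,\theta,\lambda}(u,v,w)\ \text{for all } z\in C\}$. *)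

theory Defs
  imports "HOL-Analysis.Analysis"
begin

definition rel_err_tol ::
  "real \<Rightarrow> real \<Rightarrow> real \<Rightarrow> ('a::real_inner \<Rightarrow> 'a \<Rightarrow> 'a \<Rightarrow> real) \<Rightarrow> bool" where
  "rel_err_tol \<gamma> \<theta> \<mu> \<phi> \<longleftrightarrow>
     \<gamma> \<ge> 0 \<and> \<theta> \<ge> 0 \<and> \<mu> \<ge> 0 \<and>
     (\<forall>u v w. 0 \<le> \<phi> u v w \<and>
        \<phi> u v w \<le> \<gamma> * (norm (v - u))\<^sup>2 + \<theta> * (norm (w - v))\<^sup>2 + \<mu> * (norm (w - u))\<^sup>2)"

definition inexact_proj ::
  "'a::real_inner set \<Rightarrow> ('a \<Rightarrow> 'a \<Rightarrow> 'a \<Rightarrow> real) \<Rightarrow> 'a \<Rightarrow> 'a \<Rightarrow> 'a set" where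
  "inexact_proj C \<phi> u v = {w \<in> C. \<forall>z\<in>C. inner (v - w) (z - w) \<le> \<phi> u v w}"

end

theory Submission
  imports Defs
begin

text \<open>
  Expanding the square, the inexactness condition at the point \<open>x\<close> gives
  \<open>\<parallel>w - x\<parallel>\<^sup>2 \<le> \<parallel>v - x\<parallel>\<^sup>2 - \<parallel>w - v\<parallel>\<^sup>2 + 2 \<phi>(u,v,w)\<close>, so it suffices to bound the excess
  \<open>2 \<phi>(u,v,w) - \<parallel>w - v\<parallel>\<^sup>2\<close> by a multiple of \<open>\<parallel>v - u\<parallel>\<^sup>2\<close>. The same condition at the point
  \<open>u\<close> bounds \<open>\<parallel>w - u\<parallel>\<^sup>2\<close> by \<open>\<parallel>v - u\<parallel>\<^sup>2 - \<parallel>w - v\<parallel>\<^sup>2 + 2 \<phi>(u,v,w)\<close>; feeding this into the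
  \<open>\<mu>\<close>-term of the tolerance bound and absorbing \<open>\<phi>(u,v,w)\<close> on the left (possible as
  \<open>\<mu> < 1/2\<close>) leaves the \<open>\<theta>\<close>-term with coefficient \<open>2\<theta> - 1 \<le> 0\<close>, which is discarded.
\<close>

lemma power2_norm_diff_eq_inner:
  fixes v w x :: "'a::real_inner"
  shows "(norm (w - x))\<^sup>2 = (norm (v - x))\<^sup>2 - (norm (w - v))\<^sup>2 + 2 * inner (v - w) (x - w)"
  unfolding power2_norm_eq_inner
  by (simp add: inner_diff_left inner_diff_right inner_commute algebra_simps)

lemma inexact_proj_power2_dist_le:
  assumes "w \<in> inexact_proj C \<phi> u v" and "x \<in> C"
  shows "(norm (w - x))\<^sup>2 \<le> (norm (v - x))\<^sup>2 - (norm (w - v))\<^sup>2 + 2 * \<phi> u v w"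
proof -
  have "inner (v - w) (x - w) \<le> \<phi> u v w"
    using assms by (auto simp: inexact_proj_def)
  then show ?thesis
    using power2_norm_diff_eq_inner[of w x v] by linarith
qed

lemma inexact_proj_excess_le:
  assumes "w \<in> inexact_proj C \<phi> u v" and "u \<in> C"
    and "rel_err_tol \<gamma> \<theta> \<mu> \<phi>" and "\<theta> \<le> 1/2" and "\<mu> < 1/2"
  shows "2 * \<phi> u v w - (norm (w - v))\<^sup>2
           \<le> (2 * \<gamma> + 2 * \<mu>) / (1 - 2 * \<mu>) * (norm (v - u))\<^sup>2"
proof -
  define a b c where "a = (norm (v - u))\<^sup>2" and "b = (norm (w - v))\<^sup>2"
    and "c = (norm (w - u))\<^sup>2"
  define P where "P = \<phi> u v w"
  have tol: "P \<le> \<gamma> * a + \<theta> * b + \<mu> * c" and "\<mu> \<ge> 0"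
    using assms(3) by (auto simp: rel_err_tol_def P_def a_def b_def c_def)
  have "c \<le> a - b + 2 * P"
    using inexact_proj_power2_dist_le[OF assms(1,2)]
    by (simp add: a_def b_def c_def P_def norm_minus_commute)
  with \<open>\<mu> \<ge> 0\<close> have "\<mu> * c \<le> \<mu> * (a - b + 2 * P)"
    by (intro mult_left_mono)
  moreover have "(2 * \<theta> - 1) * b \<le> 0"
    using assms(4) by (simp add: b_def mult_nonpos_nonneg)
  ultimately have "(1 - 2 * \<mu>) * (2 * P - b) \<le> (2 * \<gamma> + 2 * \<mu>) * a"
    using tol by (simp add: algebra_simps)
  with assms(5) show ?thesis
    by (simp add: P_def a_def b_def pos_le_divide_eq mult.commute)
qed

theorem lemma6:
  fixes C :: "(real ^ 'n) set" and u v w :: "real ^ 'n"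
    and \<phi> :: "real ^ 'n \<Rightarrow> real ^ 'n \<Rightarrow> real ^ 'n \<Rightarrow> real"
    and \<gamma> \<theta> \<mu> :: real
  assumes "C \<noteq> {}" and "closed C" and "convex C"
    and "u \<in> C"
    and "\<gamma> \<ge> 0" and "0 \<le> \<theta>" and "\<theta> < 1/2" and "0 \<le> \<mu>" and "\<mu> < 1/2"
    and "rel_err_tol \<gamma> \<theta> \<mu> \<phi>"
    and "w \<in> inexact_proj C \<phi> u v"
  shows "\<forall>x\<in>C. (norm (w - x))\<^sup>2 \<le> (norm (v - x))\<^sup>2
                 + (2 * \<gamma> + 2 * \<mu>) / (1 - 2 * \<mu>) * (norm (v - u))\<^sup>2"
proof
  fix x assume "x \<in> C"
  have "2 * \<phi> u v w - (norm (w - v))\<^sup>2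
          \<le> (2 * \<gamma> + 2 * \<mu>) / (1 - 2 * \<mu>) * (norm (v - u))\<^sup>2"
    using assms(11,4,10,9) \<open>\<theta> < 1/2\<close> by (intro inexact_proj_excess_le) auto
  with inexact_proj_power2_dist_le[OF assms(11) \<open>x \<in> C\<close>]
  show "(norm (w - x))\<^sup>2 \<le> (norm (v - x))\<^sup>2
          + (2 * \<gamma> + 2 * \<mu>) / (1 - 2 * \<mu>) * (norm (v - u))\<^sup>2"
    by linarith
qed

end
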